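(* For every $\phi\in L^1(\mathbb{R}_+)$ with $\int_0^\infty\phi(x)\,dx = 1$, the summability method $S_\phi$ is stronger than $K$; that is, $K$ is the weakest among these summability methods.
   Context: $\mathbb{R}_+=[0,\infty)$; functions are complex-valued. For $f\in L^\infty(\mathbb{R}_+)$: $K(f)=\alpha$ means that $f(\cdot+s)$ converges as $s\to\infty$ to the constant $\alpha$ in the weak* topology of $L^\infty(\mathbb{R}_+)$; $\mathcal{D}(K)$ is the set of $f$ for which such a constant limit exists. $S_\phi(f) = \lim_{x\to\infty}\int_0^x f(t)\phi(x-t)\,dt$, with domain the $f$ for which the limit exists. $S$ is stronger than $S'$ if $\mathcal{D}(S')\subseteq\mathcal{D}(S)$ and $S=S'$ on $\mathcal{D}(S')$. *)

theory Defs
  imports "HOL-Analysis.Analysis"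
begin

text \<open>Functions on R+ are modelled as functions real \<Rightarrow> complex, only their values on
  {0..} matter. Lebesgue measure is used throughout.\<close>

definition Linfty_Rplus :: "(real \<Rightarrow> complex) \<Rightarrow> bool" where
  "Linfty_Rplus f \<longleftrightarrow> set_borel_measurable lebesgue {0..} f \<and>
     (\<exists>B. AE t in lebesgue. t \<ge> 0 \<longrightarrow> norm (f t) \<le> B)"

text \<open>K f \<alpha>: f(.+s) \<rightarrow> \<alpha> weak* in L^\<infinity>(R+) = L^1(R+)^*, as s \<rightarrow> \<infinity>.\<close>
definition K_method :: "(real \<Rightarrow> complex) \<Rightarrow> complex \<Rightarrow> bool" where
  "K_method f \<alpha> \<longleftrightarrow> Linfty_Rplus f \<and>
     (\<forall>g :: real \<Rightarrow> complex. set_integrable lebesgue {0..} g \<longrightarrow>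
        ((\<lambda>s. LINT t:{0..}|lebesgue. f (t + s) * g t)
           \<longlongrightarrow> \<alpha> * (LINT t:{0..}|lebesgue. g t)) at_top)"

definition S_method :: "(real \<Rightarrow> complex) \<Rightarrow> (real \<Rightarrow> complex) \<Rightarrow> complex \<Rightarrow> bool" where
  "S_method \<phi> f \<alpha> \<longleftrightarrow> Linfty_Rplus f \<and>
     ((\<lambda>x. LINT t:{0..x}|lebesgue. f t * \<phi> (x - t)) \<longlongrightarrow> \<alpha>) at_top"

text \<open>Methods are relations "f is summed to \<alpha>"; the domain is {f. \<exists>\<alpha>. S f \<alpha>}
  (limits are unique). S stronger than S': D(S') \<subseteq> D(S) and S = S' on D(S').\<close>
definition stronger :: "((real \<Rightarrow> complex) \<Rightarrow> complex \<Rightarrow> bool) \<Rightarrow>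
    ((real \<Rightarrow> complex) \<Rightarrow> complex \<Rightarrow> bool) \<Rightarrow> bool" where
  "stronger S S' \<longleftrightarrow> (\<forall>f. (\<exists>\<alpha>. S' f \<alpha>) \<longrightarrow> (\<exists>\<alpha>. S f \<alpha>)) \<and>
     (\<forall>f \<alpha> \<beta>. S' f \<alpha> \<longrightarrow> S f \<beta> \<longrightarrow> \<alpha> = \<beta>)"

end

theory Submission
  imports Defs
begin

text \<open>Test the weak* convergence of \<open>f(\<cdot> + s)\<close> against the window
  \<open>g\<^sub>A(t) = \<phi>(A - t)\<close> on \<open>[0, A]\<close>: the part of \<open>\<integral>\<^sub>0\<^sup>x f(t) \<phi>(x - t) dt\<close> over
  \<open>[x - A, x]\<close> is exactly \<open>\<integral> f(t + x - A) g\<^sub>A(t) dt \<rightarrow> \<alpha> \<integral>\<^sub>0\<^sup>A \<phi>\<close>, while the part over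
  \<open>[0, x - A]\<close> is bounded by \<open>\<parallel>f\<parallel>\<^sub>\<infinity> \<integral>\<^sub>A\<^sup>\<infinity> |\<phi>|\<close>. Letting \<open>A \<rightarrow> \<infinity>\<close> yields
  \<open>S\<^sub>\<phi>(f) = \<alpha> \<integral>\<^sub>0\<^sup>\<infinity> \<phi> = \<alpha>\<close>.\<close>

lemma tendsto_by_approximation:
  fixes u :: "'a \<Rightarrow> 'b::metric_space" and v :: "'c \<Rightarrow> 'a \<Rightarrow> 'b"
  assumes "F \<noteq> bot"
    and approx: "\<forall>\<^sub>F A in F. \<forall>\<^sub>F x in G. dist (u x) (v A x) \<le> e A"
    and v_lim: "\<forall>\<^sub>F A in F. (v A \<longlongrightarrow> l A) G"
    and l_lim: "(l \<longlongrightarrow> L) F" and e_lim: "(e \<longlongrightarrow> 0) F"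
  shows "(u \<longlongrightarrow> L) G"
proof (rule tendstoI)
  fix \<epsilon> :: real
  assume "0 < \<epsilon>"
  then have \<epsilon>3: "0 < \<epsilon> / 3" by simp
  have "\<forall>\<^sub>F A in F. (\<forall>\<^sub>F x in G. dist (u x) (v A x) \<le> e A) \<and> (v A \<longlongrightarrow> l A) G \<and>
      dist (l A) L < \<epsilon> / 3 \<and> e A < \<epsilon> / 3"
    using approx v_lim tendstoD[OF l_lim \<epsilon>3] tendstoD[OF e_lim \<epsilon>3]
    by eventually_elim (auto simp: dist_real_def)
  then obtain A where approx_A: "\<forall>\<^sub>F x in G. dist (u x) (v A x) \<le> e A"
    and "(v A \<longlongrightarrow> l A) G" and l_A: "dist (l A) L < \<epsilon> / 3" and e_A: "e A < \<epsilon> / 3"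
    using eventually_happens'[OF \<open>F \<noteq> bot\<close>] by blast
  show "\<forall>\<^sub>F x in G. dist (u x) L < \<epsilon>"
    using approx_A tendstoD[OF \<open>(v A \<longlongrightarrow> l A) G\<close> \<epsilon>3]
  proof eventually_elim
    case (elim x)
    have "dist (u x) L \<le> dist (u x) (v A x) + dist (v A x) (l A) + dist (l A) L"
      by (metis add_right_mono dist_triangle order_trans)
    then show ?case
      using elim l_A e_A by linarith
  qed
qed

lemma
  fixes f h :: "'a \<Rightarrow> 'b::{real_normed_field, banach, second_countable_topology}"
  assumes f: "set_borel_measurable M S f" and f_bound: "AE x in M. x \<in> S \<longrightarrow> norm (f x) \<le> B"
    and h: "set_integrable M S h"
  shows set_integrable_bounded_mult: "set_integrable M S (\<lambda>x. f x * h x)"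
    and set_integral_bounded_mult_le: "norm (LINT x:S|M. f x * h x) \<le> B * (LINT x:S|M. norm (h x))"
proof -
  have "(\<lambda>x. indicator S x *\<^sub>R (f x * h x)) = (\<lambda>x. (indicator S x *\<^sub>R f x) * (indicator S x *\<^sub>R h x))"
    by (auto simp: fun_eq_iff indicator_def)
  then have fh: "set_borel_measurable M S (\<lambda>x. f x * h x)"
    using f borel_measurable_integrable[OF h[unfolded set_integrable_def]]
    by (simp only: set_borel_measurable_def borel_measurable_times)
  have le: "AE x in M. x \<in> S \<longrightarrow> norm (f x * h x) \<le> B * norm (h x)"
    using f_bound by eventually_elim (auto simp: norm_mult mult_right_mono)
  show int: "set_integrable M S (\<lambda>x. f x * h x)"
  proof (rule set_integrable_bound[OF _ fh])
    show "set_integrable M S (\<lambda>x. B *\<^sub>R h x)"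
      using h by (rule set_integrable_scaleR_right)
    show "AE x in M. x \<in> S \<longrightarrow> norm (f x * h x) \<le> norm (B *\<^sub>R h x)"
      using le by eventually_elim (auto intro: order_trans[OF _ mult_right_mono[OF abs_ge_self]])
  qed
  have "norm (LINT x:S|M. f x * h x) \<le> (LINT x:S|M. norm (f x * h x))"
    by (rule set_integral_norm_bound[OF int])
  also have "\<dots> \<le> (LINT x:S|M. B * norm (h x))"
    using int h le by (intro set_integral_mono_AE) (auto intro: set_integrable_norm)
  finally show "norm (LINT x:S|M. f x * h x) \<le> B * (LINT x:S|M. norm (h x))"
    by simp
qed

lemma set_integrable_reflect_real:
  fixes f :: "real \<Rightarrow> 'a::euclidean_space"
  shows "set_integrable lebesgue {x. c - x \<in> S} (\<lambda>x. f (c - x)) \<longleftrightarrow> set_integrable lebesgue S f"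
  using lebesgue_integrable_real_affine_iff[of "-1" "\<lambda>x. indicator S x *\<^sub>R f x" c]
  by (simp add: set_integrable_def indicator_def)

lemma set_integrable_reflect_atLeastAtMost:
  fixes \<phi> :: "real \<Rightarrow> 'a::euclidean_space"
  assumes "set_integrable lebesgue {0..} \<phi>"
  shows "set_integrable lebesgue {0..x} (\<lambda>t. \<phi> (x - t))"
proof -
  have "{t. x - t \<in> {0..x}} = {0..x}"
    by auto
  then show ?thesis
    using set_integrable_reflect_real[of x "{0..x}" \<phi>] set_integrable_subset[OF assms, of "{0..x}"]
    by simp
qed

lemma set_integral_reflect_real:
  fixes f :: "real \<Rightarrow> 'a::euclidean_space"
  shows "(LINT x:{x. c - x \<in> S}|lebesgue. f (c - x)) = (LINT x:S|lebesgue. f x)"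
  using lebesgue_integral_real_affine[of "-1" "\<lambda>x. indicator S x *\<^sub>R f x" c]
  by (simp add: set_lebesgue_integral_def indicator_def)

lemma set_integral_translate_real:
  fixes f :: "real \<Rightarrow> 'a::euclidean_space"
  shows "(LINT x:{x. x + c \<in> S}|lebesgue. f (x + c)) = (LINT x:S|lebesgue. f x)"
  using lebesgue_integral_real_affine[of 1 "\<lambda>x. indicator S x *\<^sub>R f x" c]
  by (simp add: set_lebesgue_integral_def indicator_def add.commute)

lemma tendsto_set_integral_atLeastAtMost_at_top:
  fixes f :: "real \<Rightarrow> 'a::{banach, second_countable_topology}"
  assumes f: "set_integrable lebesgue {a..} f"
  shows "((\<lambda>b. LINT x:{a..b}|lebesgue. f x) \<longlongrightarrow> (LINT x:{a..}|lebesgue. f x)) at_top"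
  unfolding set_lebesgue_integral_def
proof (rule integral_dominated_convergence_at_top[where w="\<lambda>x. norm (indicator {a..} x *\<^sub>R f x)"])
  show "(\<lambda>x. indicator {a..} x *\<^sub>R f x) \<in> borel_measurable lebesgue"
    using f unfolding set_integrable_def by (rule borel_measurable_integrable)
  show "(\<lambda>x. indicator {a..b} x *\<^sub>R f x) \<in> borel_measurable lebesgue" for b
    using set_integrable_subset[OF f, of "{a..b}"] unfolding set_integrable_def
    by (auto intro: borel_measurable_integrable)
  show "integrable lebesgue (\<lambda>x. norm (indicator {a..} x *\<^sub>R f x))"
    using f unfolding set_integrable_def by (rule integrable_norm)
  show "AE x in lebesgue. ((\<lambda>b. indicator {a..b} x *\<^sub>R f x) \<longlongrightarrow> indicator {a..} x *\<^sub>R f x) at_top"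
  proof (rule AE_I2, rule tendsto_eventually)
    show "\<forall>\<^sub>F b in at_top. indicator {a..b} x *\<^sub>R f x = indicator {a..} x *\<^sub>R f x" for x
      using eventually_ge_at_top[of x] by eventually_elim (auto split: split_indicator)
  qed
  show "\<forall>\<^sub>F b in at_top. AE x in lebesgue. norm (indicator {a..b} x *\<^sub>R f x) \<le> norm (indicator {a..} x *\<^sub>R f x)"
    by (intro always_eventually allI AE_I2) (auto split: split_indicator)
qed

lemma tendsto_set_integral_greaterThan_at_top:
  fixes f :: "real \<Rightarrow> 'a::{banach, second_countable_topology}"
  assumes f: "set_integrable lebesgue {a..} f"
  shows "((\<lambda>b. LINT x:{b<..}|lebesgue. f x) \<longlongrightarrow> 0) at_top"
proof -
  have "\<forall>\<^sub>F b in at_top. (LINT x:{a..}|lebesgue. f x) - (LINT x:{a..b}|lebesgue. f x) = (LINT x:{b<..}|lebesgue. f x)"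
    using eventually_ge_at_top[of a]
  proof eventually_elim
    case (elim b)
    then have "{a..} = {a..b} \<union> {b<..}" by auto
    moreover have "set_integrable lebesgue {a..b} f" "set_integrable lebesgue {b<..} f"
      using elim by (auto intro: set_integrable_subset[OF f])
    moreover have "{a..b} \<inter> {b<..} = {}" by auto
    ultimately show ?case
      using set_integral_Un[of "{a..b}" "{b<..}" lebesgue f] by simp
  qed
  moreover have "((\<lambda>b. (LINT x:{a..}|lebesgue. f x) - (LINT x:{a..b}|lebesgue. f x)) \<longlongrightarrow> 0) at_top"
    using tendsto_diff[OF tendsto_const tendsto_set_integral_atLeastAtMost_at_top[OF f],
        of "LINT x:{a..}|lebesgue. f x"] by simp
  ultimately show ?thesis by (rule Lim_transform_eventually[rotated])
qed

lemma set_integral_mono_set: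
  fixes f :: "'a \<Rightarrow> real"
  assumes f: "set_integrable M T f" and "S \<in> sets M" "S \<subseteq> T" and "\<And>x. x \<in> T \<Longrightarrow> 0 \<le> f x"
  shows "(LINT x:S|M. f x) \<le> (LINT x:T|M. f x)"
  using assms set_integrable_subset[OF f] unfolding set_lebesgue_integral_def set_integrable_def
  by (intro integral_mono) (auto split: split_indicator)

context
  fixes f \<phi> :: "real \<Rightarrow> 'a::{real_normed_field, euclidean_space}" and B :: real
  assumes f: "set_borel_measurable lebesgue {0..} f"
    and f_bound: "AE t in lebesgue. t \<ge> 0 \<longrightarrow> norm (f t) \<le> B"
    and \<phi>: "set_integrable lebesgue {0..} \<phi>"
begin

lemma
  assumes S: "S \<in> sets lebesgue" "S \<subseteq> {0..x}"
  shows set_integrable_convolution: "set_integrable lebesgue S (\<lambda>t. f t * \<phi> (x - t))"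
    and norm_set_integral_convolution_le:
      "norm (LINT t:S|lebesgue. f t * \<phi> (x - t)) \<le> B * (LINT u:{u. x - u \<in> S}|lebesgue. norm (\<phi> u))"
proof -
  have \<phi>_S: "set_integrable lebesgue S (\<lambda>t. \<phi> (x - t))"
    using set_integrable_reflect_atLeastAtMost[OF \<phi>] S by (rule set_integrable_subset)
  have f_S: "set_borel_measurable lebesgue S f"
  proof -
    have "(\<lambda>t. indicator S t *\<^sub>R f t) = (\<lambda>t. indicator S t *\<^sub>R (indicator {0..} t *\<^sub>R f t))"
      using S by (auto simp: fun_eq_iff split: split_indicator)
    with f S show ?thesis
      unfolding set_borel_measurable_def by (simp only:) (rule borel_measurable_scaleR[OF borel_measurable_indicator])
  qed
  have f_bound_S: "AE t in lebesgue. t \<in> S \<longrightarrow> norm (f t) \<le> B"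
    using f_bound by eventually_elim (use S in auto)
  show "set_integrable lebesgue S (\<lambda>t. f t * \<phi> (x - t))"
    by (rule set_integrable_bounded_mult[OF f_S f_bound_S \<phi>_S])
  have "(LINT t:S|lebesgue. norm (\<phi> (x - t))) = (LINT u:{u. x - u \<in> S}|lebesgue. norm (\<phi> u))"
    using set_integral_reflect_real[of x "{u. x - u \<in> S}" "\<lambda>u. norm (\<phi> u)"] by simp
  then show "norm (LINT t:S|lebesgue. f t * \<phi> (x - t)) \<le> B * (LINT u:{u. x - u \<in> S}|lebesgue. norm (\<phi> u))"
    using set_integral_bounded_mult_le[OF f_S f_bound_S \<phi>_S] by simp
qed

lemma set_integral_convolution_split:
  assumes "0 \<le> A" "A \<le> x"
  shows "(LINT t:{0..x}|lebesgue. f t * \<phi> (x - t)) =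
    (LINT t:{0..<x-A}|lebesgue. f t * \<phi> (x - t)) + (LINT t:{0..A}|lebesgue. f (t + (x - A)) * \<phi> (A - t))"
proof -
  have "{0..x} = {0..<x-A} \<union> {x-A..x}" "{0..<x-A} \<inter> {x-A..x} = {}"
    using assms by auto
  then have "(LINT t:{0..x}|lebesgue. f t * \<phi> (x - t)) =
      (LINT t:{0..<x-A}|lebesgue. f t * \<phi> (x - t)) + (LINT t:{x-A..x}|lebesgue. f t * \<phi> (x - t))"
    using assms by (simp add: set_integral_Un set_integrable_convolution)
  moreover have shifted: "{t. t + (x - A) \<in> {x-A..x}} = {0..A}"
    by auto
  have "(LINT t:{x-A..x}|lebesgue. f t * \<phi> (x - t)) = (LINT t:{0..A}|lebesgue. f (t + (x - A)) * \<phi> (A - t))"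
    using set_integral_translate_real[of "x - A" "{x-A..x}" "\<lambda>t. f t * \<phi> (x - t)"]
    unfolding shifted by (simp add: algebra_simps)
  ultimately show ?thesis
    by simp
qed

lemma dist_convolution_window_le:
  assumes "0 \<le> B" "0 \<le> A" "A \<le> x"
  shows "dist (LINT t:{0..x}|lebesgue. f t * \<phi> (x - t)) (LINT t:{0..A}|lebesgue. f (t + (x - A)) * \<phi> (A - t))
    \<le> B * (LINT u:{A<..}|lebesgue. norm (\<phi> u))"
proof -
  have reflected: "{u. x - u \<in> {0..<x-A}} = {A<..x}"
    using \<open>0 \<le> A\<close> by auto
  have tail_int: "set_integrable lebesgue {A<..} (\<lambda>u. norm (\<phi> u))"
    using \<open>0 \<le> A\<close> by (intro set_integrable_norm set_integrable_subset[OF \<phi>]) auto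
  have "dist (LINT t:{0..x}|lebesgue. f t * \<phi> (x - t)) (LINT t:{0..A}|lebesgue. f (t + (x - A)) * \<phi> (A - t))
      = norm (LINT t:{0..<x-A}|lebesgue. f t * \<phi> (x - t))"
    using set_integral_convolution_split[OF \<open>0 \<le> A\<close> \<open>A \<le> x\<close>] by (simp add: dist_norm)
  also have "\<dots> \<le> B * (LINT u:{A<..x}|lebesgue. norm (\<phi> u))"
    using norm_set_integral_convolution_le[of "{0..<x-A}" x] \<open>0 \<le> A\<close>
    unfolding reflected by fastforce
  also have "\<dots> \<le> B * (LINT u:{A<..}|lebesgue. norm (\<phi> u))"
    using \<open>0 \<le> B\<close> by (intro mult_left_mono set_integral_mono_set[OF tail_int]) auto
  finally show ?thesis .
qed

end

lemma K_method_tendsto_window: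
  fixes \<phi> f :: "real \<Rightarrow> complex"
  assumes K: "K_method f \<alpha>" and \<phi>: "set_integrable lebesgue {0..} \<phi>"
  shows "((\<lambda>x. LINT t:{0..A}|lebesgue. f (t + (x - A)) * \<phi> (A - t))
    \<longlongrightarrow> \<alpha> * (LINT u:{0..A}|lebesgue. \<phi> u)) at_top"
proof -
  define g where "g t = indicator {0..A} t *\<^sub>R \<phi> (A - t)" for t
  have set_integral_g: "(LINT t:{0..}|lebesgue. h t * g t) = (LINT t:{0..A}|lebesgue. h t * \<phi> (A - t))"
    for h :: "real \<Rightarrow> complex"
    unfolding set_lebesgue_integral_def g_def
    by (intro Bochner_Integration.integral_cong) (auto split: split_indicator)
  have reflected: "{t. A - t \<in> {0..A}} = {0..A}"
    by auto
  have "(\<lambda>t. indicator {0..} t *\<^sub>R g t) = (\<lambda>t. indicator {0..A} t *\<^sub>R \<phi> (A - t))"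
    by (auto simp: fun_eq_iff g_def split: split_indicator)
  then have "set_integrable lebesgue {0..} g"
    using set_integrable_reflect_atLeastAtMost[OF \<phi>, of A] by (simp add: set_integrable_def)
  with K have "((\<lambda>s. LINT t:{0..}|lebesgue. f (t + s) * g t) \<longlongrightarrow> \<alpha> * (LINT t:{0..}|lebesgue. g t)) at_top"
    unfolding K_method_def by blast
  moreover have "(LINT t:{0..}|lebesgue. g t) = (LINT u:{0..A}|lebesgue. \<phi> u)"
    using set_integral_g[of "\<lambda>_. 1"] set_integral_reflect_real[of A "{0..A}" \<phi>]
    unfolding reflected by simp
  ultimately have "((\<lambda>s. LINT t:{0..A}|lebesgue. f (t + s) * \<phi> (A - t))
      \<longlongrightarrow> \<alpha> * (LINT u:{0..A}|lebesgue. \<phi> u)) at_top"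
    by (simp add: set_integral_g)
  moreover have "filterlim (\<lambda>x. x - A) at_top at_top"
    using filterlim_tendsto_add_at_top[OF tendsto_const[of "-A"] filterlim_ident] by simp
  ultimately show ?thesis
    by (rule filterlim_compose)
qed

lemma K_method_imp_S_method:
  fixes \<phi> f :: "real \<Rightarrow> complex"
  assumes \<phi>: "set_integrable lebesgue {0..} \<phi>" and \<phi>_one: "(LINT x:{0..}|lebesgue. \<phi> x) = 1"
    and K: "K_method f \<alpha>"
  shows "S_method \<phi> f \<alpha>"
proof -
  have f: "Linfty_Rplus f"
    using K unfolding K_method_def by simp
  then have f_meas: "set_borel_measurable lebesgue {0..} f"
    unfolding Linfty_Rplus_def by simp
  obtain B0 where B0: "AE t in lebesgue. t \<ge> 0 \<longrightarrow> norm (f t) \<le> B0"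
    using f unfolding Linfty_Rplus_def by auto
  define B where "B = max B0 0"
  have f_bound: "AE t in lebesgue. t \<ge> 0 \<longrightarrow> norm (f t) \<le> B"
    using B0 by eventually_elim (auto simp: B_def)
  have "((\<lambda>x. LINT t:{0..x}|lebesgue. f t * \<phi> (x - t)) \<longlongrightarrow> \<alpha>) at_top"
  proof (rule tendsto_by_approximation[where F=at_top
        and v="\<lambda>A x. LINT t:{0..A}|lebesgue. f (t + (x - A)) * \<phi> (A - t)"
        and l="\<lambda>A. \<alpha> * (LINT u:{0..A}|lebesgue. \<phi> u)"
        and e="\<lambda>A. B * (LINT u:{A<..}|lebesgue. norm (\<phi> u))"])
    show "\<forall>\<^sub>F A in at_top. \<forall>\<^sub>F x in at_top. dist (LINT t:{0..x}|lebesgue. f t * \<phi> (x - t))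
        (LINT t:{0..A}|lebesgue. f (t + (x - A)) * \<phi> (A - t)) \<le> B * (LINT u:{A<..}|lebesgue. norm (\<phi> u))"
      using eventually_ge_at_top[of 0]
    proof eventually_elim
      case (elim A)
      have "0 \<le> B"
        by (simp add: B_def)
      show ?case
        using eventually_ge_at_top[of A]
        by eventually_elim (rule dist_convolution_window_le[OF f_meas f_bound \<phi> \<open>0 \<le> B\<close> elim])
    qed
    show "\<forall>\<^sub>F A in at_top. ((\<lambda>x. LINT t:{0..A}|lebesgue. f (t + (x - A)) * \<phi> (A - t))
        \<longlongrightarrow> \<alpha> * (LINT u:{0..A}|lebesgue. \<phi> u)) at_top"
      by (intro always_eventually allI K_method_tendsto_window[OF K \<phi>])
    show "((\<lambda>A. \<alpha> * (LINT u:{0..A}|lebesgue. \<phi> u)) \<longlongrightarrow> \<alpha>) at_top"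
      using tendsto_mult_left[OF tendsto_set_integral_atLeastAtMost_at_top[OF \<phi>], of \<alpha>] \<phi>_one by simp
    show "((\<lambda>A. B * (LINT u:{A<..}|lebesgue. norm (\<phi> u))) \<longlongrightarrow> 0) at_top"
      using tendsto_mult_right_zero[OF tendsto_set_integral_greaterThan_at_top[OF set_integrable_norm[OF \<phi>]]]
      by simp
  qed simp
  with f show ?thesis
    unfolding S_method_def by simp
qed

theorem corollary3p2:
  fixes \<phi> :: "real \<Rightarrow> complex"
  assumes "set_integrable lebesgue {0..} \<phi>"
    and "(LINT x:{0..}|lebesgue. \<phi> x) = 1"
  shows "stronger (S_method \<phi>) K_method"
  unfolding stronger_def
proof (intro conjI allI impI)
  show "\<exists>\<beta>. S_method \<phi> f \<beta>" if "\<exists>\<alpha>. K_method f \<alpha>" for f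
    using that K_method_imp_S_method[OF assms] by blast
  show "\<alpha> = \<beta>" if "K_method f \<alpha>" and "S_method \<phi> f \<beta>" for f \<alpha> \<beta>
    using K_method_imp_S_method[OF assms that(1)] that(2)
    unfolding S_method_def by (blast intro: tendsto_unique[OF trivial_limit_at_top_linorder])
qed

end
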